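(* Let $n\ge1$ and $\boldsymbol x=(x_1,\dots,x_n)\in\mathbb C^n$ with pairwise distinct components. Let $\sigma_{l,d}$ (resp. $\sigma_d$) be the elementary symmetric polynomial of degree $d$ in $x_1,\dots,\widehat{x_l},\dots,x_n$ (resp. in $x_1,\dots,x_n$), with $\sigma_0=1$, and let $\tau_l=\prod_{h\neq l}(x_l-x_h)$. Let $\Sigma=(\sigma_{l,n-j})_{l,j=1}^n$, $X=\mathrm{diag}(x_l)_{l=1}^n$, $T=\mathrm{diag}(\tau_l^{-1})_{l=1}^n$. Then for every $r\in\{0,1,\dots,n\}$, $${}^t\Sigma\,X^rT\,\Sigma=\begin{pmatrix}(-1)^{n-r}A&0\\0&(-1)^{n-r+1}B\end{pmatrix},$$ where $A$ is the $r\times r$ matrix with $(k,j)$-entry $a_{k,j}=\sigma_{n+r-k-j+1}$ if $k+j\ge r+1$ and $0$ otherwise, and $B$ is the $(n-r)\times(n-r)$ matrix with $(k,j)$-entry $b_{k,j}=\sigma_{n-r-k-j+1}$ if $k+j\le n-r+1$ and $0$ otherwise.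
   Context: ${}^t\Sigma$ denotes the transpose of $\Sigma$. *)

theory Defs
  imports Complex_Main "Jordan_Normal_Form.Matrix"
begin

definition esym :: "(nat \<Rightarrow> complex) \<Rightarrow> nat set \<Rightarrow> nat \<Rightarrow> complex" where
  "esym x S d = (\<Sum>U | U \<subseteq> S \<and> card U = d. \<Prod>i\<in>U. x i)"

(* Paper indices are 1..n; JNF matrices are 0-indexed, so entry (i,j) of a
   matrix below is the paper's entry (i+1, j+1). *)

definition sigma_l :: "nat \<Rightarrow> (nat \<Rightarrow> complex) \<Rightarrow> nat \<Rightarrow> nat \<Rightarrow> complex" where
  "sigma_l n x l d = esym x ({1..n} - {l}) d"

definition sigma :: "nat \<Rightarrow> (nat \<Rightarrow> complex) \<Rightarrow> nat \<Rightarrow> complex" where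
  "sigma n x d = esym x {1..n} d"

definition tau :: "nat \<Rightarrow> (nat \<Rightarrow> complex) \<Rightarrow> nat \<Rightarrow> complex" where
  "tau n x l = (\<Prod>h\<in>{1..n} - {l}. (x l - x h))"

definition SigmaM :: "nat \<Rightarrow> (nat \<Rightarrow> complex) \<Rightarrow> complex mat" where
  "SigmaM n x = mat n n (\<lambda>(i, j). let l = i + 1; jj = j + 1 in sigma_l n x l (n - jj))"

definition XM :: "nat \<Rightarrow> (nat \<Rightarrow> complex) \<Rightarrow> complex mat" where
  "XM n x = mat n n (\<lambda>(i, j). if i = j then x (i + 1) else 0)"

definition TM :: "nat \<Rightarrow> (nat \<Rightarrow> complex) \<Rightarrow> complex mat" where
  "TM n x = mat n n (\<lambda>(i, j). if i = j then inverse (tau n x (i + 1)) else 0)"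

definition AM :: "nat \<Rightarrow> (nat \<Rightarrow> complex) \<Rightarrow> nat \<Rightarrow> complex mat" where
  "AM n x r = mat r r (\<lambda>(i, j). let k = i + 1; jj = j + 1 in
      if k + jj \<ge> r + 1 then sigma n x (n + r + 1 - k - jj) else 0)"

definition BM :: "nat \<Rightarrow> (nat \<Rightarrow> complex) \<Rightarrow> nat \<Rightarrow> complex mat" where
  "BM n x r = mat (n - r) (n - r) (\<lambda>(i, j). let k = i + 1; jj = j + 1 in
      if k + jj \<le> n - r + 1 then sigma n x (n - r + 1 - k - jj) else 0)"

end

theory Submission
  imports Defs "HOL-Computational_Algebra.Polynomial"
begin

(* Entry (k,j) of  tSigma X^r T Sigma  is  sum_l x_l^r s_{l,n-k} s_{l,n-j} / tau_l.  Lagrange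
   interpolation at the distinct nodes x_l gives  sum_l x_l^e / tau_l = [e = n-1]  for e < n, and with
   the expansion  s_{l,d} = sum_i (-1)^i s_{d-i} x_l^i  this becomes the orthogonality relation
   sum_l x_l^i s_{l,m} / tau_l = (-1)^m [i + m = n-1].  It remains to write  x_l^r s_{l,a}  as a
   polynomial of degree < n in x_l with coefficients s_d: by the same expansion if a + r < n (lower
   block), and otherwise (upper block) by iterating  s_{d+1} = s_{l,d+1} + x_l s_{l,d}  up to the
   index a + r >= n, where s_{l,a+r} vanishes. *)

lemma esym_0: "finite S \<Longrightarrow> esym x S 0 = 1"
  unfolding esym_def by (simp add: rev_finite_subset[of S] cong: conj_cong)

lemma esym_eq_0: "finite S \<Longrightarrow> card S < d \<Longrightarrow> esym x S d = 0"
  unfolding esym_def by (auto dest: card_mono intro!: sum.neutral)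

lemma esym_insert:
  assumes "finite S" "a \<notin> S"
  shows "esym x (insert a S) (Suc d) = esym x S (Suc d) + x a * esym x S d"
proof -
  let ?E = "\<lambda>k. {U. U \<subseteq> S \<and> card U = k}"
  have fin: "finite U" if "U \<subseteq> S" for U
    using assms(1) that by (rule finite_subset[rotated])
  have split: "{U. U \<subseteq> insert a S \<and> card U = Suc d} = ?E (Suc d) \<union> insert a ` ?E d"
  proof (intro equalityI subsetI)
    fix U assume U: "U \<in> {U. U \<subseteq> insert a S \<and> card U = Suc d}"
    show "U \<in> ?E (Suc d) \<union> insert a ` ?E d"
    proof (cases "a \<in> U")
      case True
      then have "U = insert a (U - {a})" "U - {a} \<in> ?E d"
        using U fin[of "U - {a}"] by (auto simp: card_Diff_singleton_if)
      then show ?thesis by blast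
    qed (use U in auto)
  qed (use assms in \<open>auto intro!: card_insert_disjoint fin\<close>)
  have inj: "inj_on (insert a) (?E d)"
    using assms by (intro inj_onI) (metis Diff_insert_absorb mem_Collect_eq subsetD)
  have "esym x (insert a S) (Suc d) = esym x S (Suc d) + (\<Sum>U\<in>?E d. \<Prod>i\<in>insert a U. x i)"
    unfolding esym_def split using assms fin
    by (subst sum.union_disjoint) (auto simp: sum.reindex[OF inj])
  also have "(\<Sum>U\<in>?E d. \<Prod>i\<in>insert a U. x i) = x a * esym x S d"
    unfolding esym_def sum_distrib_left using assms fin
    by (intro sum.cong refl) (auto intro!: prod.insert fin)
  finally show ?thesis .
qed

lemma esym_remove:
  assumes "finite S" "l \<in> S"
  shows "esym x S (Suc d) = esym x (S - {l}) (Suc d) + x l * esym x (S - {l}) d"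
  using esym_insert[of "S - {l}" l x d] assms by (simp add: insert_absorb)

lemma esym_remove_expand:
  assumes "finite S" "l \<in> S"
  shows "esym x (S - {l}) d = (\<Sum>i\<le>d. (-1)^i * esym x S (d - i) * x l ^ i)"
proof (induction d)
  case 0
  show ?case using assms by (simp add: esym_0)
next
  case (Suc d)
  have "esym x (S - {l}) (Suc d) = esym x S (Suc d) - x l * esym x (S - {l}) d"
    using esym_remove[OF assms] by simp
  also have "\<dots> = (\<Sum>i\<le>Suc d. (-1)^i * esym x S (Suc d - i) * x l ^ i)"
    unfolding Suc sum.atMost_Suc_shift by (simp add: sum_distrib_left sum_negf algebra_simps)
  finally show ?case .
qed

lemma esym_remove_shift:
  assumes "finite S" "l \<in> S"
  shows "(-1)^r * x l ^ r * esym x (S - {l}) d + (\<Sum>e<r. (-1)^e * esym x S (d + r - e) * x l ^ e)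
    = esym x (S - {l}) (d + r)"
proof (induction r arbitrary: d)
  case (Suc r)
  have "esym x (S - {l}) (Suc d) = esym x S (Suc d) - x l * esym x (S - {l}) d"
    using esym_remove[OF assms] by simp
  with Suc[of "Suc d"] show ?case by (simp add: algebra_simps)
qed simp

lemma power_mult_esym_remove_reduce:
  assumes "finite S" "l \<in> S" "card S \<le> d + r"
  shows "x l ^ r * esym x (S - {l}) d = - (\<Sum>e<r. (-1)^(r + e) * esym x S (d + r - e) * x l ^ e)"
proof -
  have "card S > 0"
    using assms card_gt_0_iff by blast
  then have "esym x (S - {l}) (d + r) = 0"
    using assms by (intro esym_eq_0) auto
  then have "(-1)^r * x l ^ r * esym x (S - {l}) d
      = - (\<Sum>e<r. (-1)^e * esym x S (d + r - e) * x l ^ e)"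
    using esym_remove_shift[OF assms(1,2), of r x d] by (simp add: eq_neg_iff_add_eq_0)
  then have "(-1)^r * ((-1)^r * x l ^ r * esym x (S - {l}) d)
      = - (\<Sum>e<r. (-1)^(r + e) * esym x S (d + r - e) * x l ^ e)"
    by (simp add: sum_distrib_left power_add mult.assoc)
  moreover have "(-1::complex)^r * (-1)^r = 1"
    by (simp flip: power_mult_distrib)
  ultimately show ?thesis
    by (metis mult.assoc mult_1)
qed

lemma lagrange_power_sum:
  fixes x :: "'a \<Rightarrow> 'b :: field"
  assumes "finite S" "inj_on x S" "e < card S"
  shows "(\<Sum>l\<in>S. x l ^ e / (\<Prod>h\<in>S - {l}. x l - x h)) = (if e = card S - 1 then 1 else 0)"
proof -
  define p where "p l = (\<Prod>h\<in>S - {l}. [:- x h, 1:])" for l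
  define Q where "Q = (\<Sum>l\<in>S. smult (x l ^ e / (\<Prod>h\<in>S - {l}. x l - x h)) (p l))"
  have poly_p: "poly (p l) (x m) = (if m = l then \<Prod>h\<in>S - {l}. x l - x h else 0)"
    if "m \<in> S" for l m
    using that assms(1) by (auto simp: p_def poly_prod)
  have denom_nz: "(\<Prod>h\<in>S - {l}. x l - x h) \<noteq> 0" if "l \<in> S" for l
    using assms(1) inj_onD[OF assms(2)] that by auto
  have deg_p: "degree (p l) = card S - 1" if "l \<in> S" for l
    using that assms(1) by (simp add: p_def degree_prod_eq_sum_degree)
  have lead_p: "coeff (p l) (card S - 1) = 1" if "l \<in> S" for l
  proof -
    have "lead_coeff (p l) = 1"
      by (simp add: p_def lead_coeff_prod)
    then show ?thesis
      by (simp add: deg_p[OF that])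
  qed
  have "poly Q (x m) = (\<Sum>l\<in>S. if l = m then x m ^ e else 0)" if "m \<in> S" for m
    unfolding Q_def poly_sum using that denom_nz by (intro sum.cong) (auto simp: poly_p)
  then have agree: "poly Q z = poly (monom 1 e) z" if "z \<in> x ` S" for z
    using that assms(1) by (auto simp: poly_monom)
  have "degree Q \<le> card S - 1" unfolding Q_def using assms(1)
    by (intro degree_sum_le) (auto intro: order.trans[OF degree_smult_le] simp: deg_p)
  then have deg_Q: "degree Q < card S"
    using assms(3) by linarith
  have "Q = monom 1 e"
    using card_image[OF assms(2)] assms(3) deg_Q
    by (intro poly_eqI_degree[OF agree]) (auto simp: degree_monom_eq)
  then have "coeff Q (card S - 1) = (if e = card S - 1 then 1 else 0)"
    by (simp add: coeff_monom)
  moreover have "coeff Q (card S - 1) = (\<Sum>l\<in>S. x l ^ e / (\<Prod>h\<in>S - {l}. x l - x h))"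
    unfolding Q_def coeff_sum using lead_p by (intro sum.cong) auto
  ultimately show ?thesis by simp
qed

lemma esym_remove_orthogonality:
  assumes "finite S" "inj_on x S" "i < card S" "m < card S"
  shows "(\<Sum>l\<in>S. x l ^ i * esym x (S - {l}) m / (\<Prod>h\<in>S - {l}. x l - x h))
    = (if i + m = card S - 1 then (-1)^m else 0)"
proof (cases "card S \<le> m + i")
  case True
  have "(\<Sum>l\<in>S. x l ^ i * esym x (S - {l}) m / (\<Prod>h\<in>S - {l}. x l - x h))
      = (\<Sum>l\<in>S. - (\<Sum>e<i. (-1)^(i + e) * esym x S (m + i - e) * x l ^ e)
          / (\<Prod>h\<in>S - {l}. x l - x h))"
    using power_mult_esym_remove_reduce[OF assms(1) _ True] by (intro sum.cong) simp_all
  also have "\<dots> = - (\<Sum>e<i. (-1)^(i + e) * esym x S (m + i - e)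
      * (\<Sum>l\<in>S. x l ^ e / (\<Prod>h\<in>S - {l}. x l - x h)))"
    by (simp add: sum_distrib_left sum_divide_distrib sum_negf mult_ac sum.swap[of _ "{..<i}"])
  also have "\<dots> = 0"
    using assms by (auto simp: lagrange_power_sum intro!: sum.neutral)
  finally show ?thesis
    using True assms(3) by simp
next
  case False
  have "(\<Sum>l\<in>S. x l ^ i * esym x (S - {l}) m / (\<Prod>h\<in>S - {l}. x l - x h))
      = (\<Sum>l\<in>S. (\<Sum>a\<le>m. (-1)^a * esym x S (m - a) * x l ^ (a + i))
          / (\<Prod>h\<in>S - {l}. x l - x h))"
    using esym_remove_expand[OF assms(1)]
    by (intro sum.cong) (simp_all add: sum_distrib_left power_add mult_ac)
  also have "\<dots> = (\<Sum>a\<le>m. (-1)^a * esym x S (m - a)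
      * (\<Sum>l\<in>S. x l ^ (a + i) / (\<Prod>h\<in>S - {l}. x l - x h)))"
    by (simp add: sum_distrib_left sum_divide_distrib mult_ac sum.swap[of _ "{..m}"])
  also have "\<dots> = (\<Sum>a\<le>m. if a = card S - 1 - i then (-1)^a * esym x S (m - a) else 0)"
    using assms False by (intro sum.cong) (auto simp: lagrange_power_sum)
  also have "\<dots> = (if i + m = card S - 1 then (-1)^m else 0)"
  proof (cases "i + m = card S - 1")
    case True
    then have "card S - 1 - i = m"
      by simp
    then show ?thesis
      using True assms(1) by (simp add: esym_0)
  qed (use False in simp)
  finally show ?thesis .
qed

lemma esym_pairing_upper:
  assumes "finite S" "inj_on x S" "card S = n" "k < r" "r \<le> n" "j < n"
  shows "(\<Sum>l\<in>S. x l ^ r * esym x (S - {l}) (n - 1 - k) * esym x (S - {l}) (n - 1 - j)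
      / (\<Prod>h\<in>S - {l}. x l - x h))
    = (if j < r then (-1)^(n - r) * esym x S (n - 1 - k + r - j) else 0)"
proof -
  let ?a = "n - 1 - k" and ?b = "n - 1 - j"
  have "(\<Sum>l\<in>S. x l ^ r * esym x (S - {l}) ?a * esym x (S - {l}) ?b / (\<Prod>h\<in>S - {l}. x l - x h))
      = (\<Sum>l\<in>S. - (\<Sum>e<r. (-1)^(r + e) * esym x S (?a + r - e) * x l ^ e)
          * esym x (S - {l}) ?b / (\<Prod>h\<in>S - {l}. x l - x h))"
    using power_mult_esym_remove_reduce[OF assms(1), of _ ?a r] assms by (intro sum.cong) auto
  also have "\<dots> = - (\<Sum>e<r. (-1)^(r + e) * esym x S (?a + r - e)
      * (\<Sum>l\<in>S. x l ^ e * esym x (S - {l}) ?b / (\<Prod>h\<in>S - {l}. x l - x h)))"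
    by (simp add: sum_distrib_left sum_distrib_right sum_divide_distrib sum_negf mult_ac
        sum.swap[of _ "{..<r}"])
  also have "\<dots> = - (\<Sum>e<r. if e = j then (-1)^(r + j) * esym x S (?a + r - j) * (-1)^?b else 0)"
    using assms by (intro arg_cong[of _ _ uminus] sum.cong) (auto simp: esym_remove_orthogonality)
  also have "\<dots> = (if j < r then (-1)^(n - r) * esym x S (?a + r - j) else 0)"
    using assms by (auto simp: minus_one_power_iff)
  finally show ?thesis .
qed

lemma esym_pairing_lower:
  assumes "finite S" "inj_on x S" "card S = n" "r \<le> k" "k < n" "j < n"
  shows "(\<Sum>l\<in>S. x l ^ r * esym x (S - {l}) (n - 1 - k) * esym x (S - {l}) (n - 1 - j)
      / (\<Prod>h\<in>S - {l}. x l - x h))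
    = (if r \<le> j \<and> j \<le> n - 1 - k + r then (-1)^(n - r + 1) * esym x S (n - 1 - k + r - j)
       else 0)"
proof -
  let ?a = "n - 1 - k" and ?b = "n - 1 - j"
  have "(\<Sum>l\<in>S. x l ^ r * esym x (S - {l}) ?a * esym x (S - {l}) ?b / (\<Prod>h\<in>S - {l}. x l - x h))
      = (\<Sum>l\<in>S. (\<Sum>i\<le>?a. (-1)^i * esym x S (?a - i) * x l ^ (i + r))
          * esym x (S - {l}) ?b / (\<Prod>h\<in>S - {l}. x l - x h))"
    using esym_remove_expand[OF assms(1)]
    by (intro sum.cong) (simp_all add: sum_distrib_left sum_distrib_right power_add mult_ac)
  also have "\<dots> = (\<Sum>i\<le>?a. (-1)^i * esym x S (?a - i)
      * (\<Sum>l\<in>S. x l ^ (i + r) * esym x (S - {l}) ?b / (\<Prod>h\<in>S - {l}. x l - x h)))"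
    unfolding sum_distrib_right sum_divide_distrib
    by (subst sum.swap) (simp add: sum_distrib_left mult_ac)
  also have "\<dots> = (\<Sum>i\<le>?a. if i = j - r then
      (if r \<le> j then (-1)^i * esym x S (?a - i) * (-1)^?b else 0) else 0)"
    using assms by (intro sum.cong) (auto simp: esym_remove_orthogonality)
  also have "\<dots> = (if r \<le> j \<and> j \<le> ?a + r then (-1)^(n - r + 1) * esym x S (?a + r - j) else 0)"
    using assms by (auto simp: minus_one_power_iff)
  finally show ?thesis .
qed

lemma mat_diag_pow: "mat_diag n f ^\<^sub>m r = mat_diag n (\<lambda>i. f i ^ r)"
  by (induction r) (simp_all add: carrier_matD[OF mat_diag_dim] power_Suc2 del: power_Suc)

lemma XM_eq_mat_diag: "XM n x = mat_diag n (\<lambda>i. x (i + 1))"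
  unfolding XM_def mat_diag_def by (rule eq_matI) auto

lemma TM_eq_mat_diag: "TM n x = mat_diag n (\<lambda>i. inverse (tau n x (i + 1)))"
  unfolding TM_def mat_diag_def by (rule eq_matI) auto

lemma SigmaM_congruence_entry:
  assumes "k < n" "j < n"
  shows "(transpose_mat (SigmaM n x) * (XM n x ^\<^sub>m r) * TM n x * SigmaM n x) $$ (k, j)
    = (\<Sum>l\<in>{1..n}. x l ^ r * sigma_l n x l (n - 1 - k) * sigma_l n x l (n - 1 - j) / tau n x l)"
proof -
  have Sigma: "SigmaM n x \<in> carrier_mat n n"
    by (simp add: SigmaM_def)
  have "(transpose_mat (SigmaM n x) * (XM n x ^\<^sub>m r) * TM n x * SigmaM n x) $$ (k, j)
      = (\<Sum>t<n. SigmaM n x $$ (t, k) * x (t + 1) ^ r * inverse (tau n x (t + 1)) * SigmaM n x $$ (t, j))"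
    using assms Sigma
    by (simp add: XM_eq_mat_diag TM_eq_mat_diag mat_diag_pow mat_diag_mult_right[where nr = n]
        scalar_prod_def atLeast0LessThan)
  also have "\<dots> = (\<Sum>l\<in>{1..n}. x l ^ r * sigma_l n x l (n - 1 - k) * sigma_l n x l (n - 1 - j) / tau n x l)"
    using assms by (simp add: SigmaM_def sum.atLeast1_atMost_eq divide_inverse mult_ac)
  finally show ?thesis .
qed

lemma sigma_l_pairing:
  assumes "inj_on x {1..n}" "r \<le> n" "k < n" "j < n"
  shows "(\<Sum>l\<in>{1..n}. x l ^ r * sigma_l n x l (n - 1 - k) * sigma_l n x l (n - 1 - j) / tau n x l)
    = (if k < r then (if j < r then (-1)^(n - r) * sigma n x (n - 1 - k + r - j) else 0)
       else if r \<le> j \<and> j \<le> n - 1 - k + r then (-1)^(n - r + 1) * sigma n x (n - 1 - k + r - j)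
       else 0)"
  unfolding sigma_def sigma_l_def tau_def
  using esym_pairing_upper[of "{1..n}" x n k r j] esym_pairing_lower[of "{1..n}" x n r k j] assms
  by simp

lemma sigma_eq_0: "n < d \<Longrightarrow> sigma n x d = 0"
  by (simp add: sigma_def esym_eq_0)

theorem lemma7p3:
  fixes n r :: nat and x :: "nat \<Rightarrow> complex"
  assumes "n \<ge> 1"
    and "inj_on x {1..n}"
    and "r \<le> n"
  shows "transpose_mat (SigmaM n x) * (XM n x ^\<^sub>m r) * TM n x * SigmaM n x =
    four_block_mat (((-1) ^ (n - r)) \<cdot>\<^sub>m AM n x r) (0\<^sub>m r (n - r))
                   (0\<^sub>m (n - r) r) (((-1) ^ (n - r + 1)) \<cdot>\<^sub>m BM n x r)"
proof (rule eq_matI, goal_cases entry)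
  case (entry k j)
  then have kj: "k < n" "j < n"
    using assms by (auto simp: AM_def BM_def)
  show ?case
    unfolding SigmaM_congruence_entry[OF kj] sigma_l_pairing[OF assms(2,3) kj]
    using kj assms by (simp add: AM_def BM_def Let_def sigma_eq_0) arith
qed (use assms in \<open>auto simp: SigmaM_def AM_def BM_def\<close>)

end
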